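(* Let $p,q,n$ be positive integers, $\boldsymbol\Lambda$ a real $p\times q$ matrix, $\boldsymbol\Gamma$ a real $p\times p$ matrix with $\boldsymbol\Gamma\boldsymbol\Gamma'=\mathbf I_p-\boldsymbol\Lambda\boldsymbol\Lambda'$, $\mathbf Y,\hat{\mathbf Y}$ real $q\times n$ matrices and $\hat{\mathbf W}$ a real $p\times n$ matrix. For $t\in(0,1)$ set $\mathbf Y(t)=\sqrt t\,\mathbf Y+\sqrt{1-t}\,\hat{\mathbf Y}$, $\mathbf X(t)=\boldsymbol\Lambda\mathbf Y(t)+\boldsymbol\Gamma\hat{\mathbf W}$, and assume $\mathbf X(t)\mathbf X(t)'$ and $\mathbf Y(t)\mathbf Y(t)'$ are invertible. Let $\mathbf Q(t)=(\mathbf X(t)\mathbf X(t)')^{-1}\mathbf X(t)$, $\mathbf U(t)=(\mathbf Y(t)\mathbf Y(t)')^{-1}\mathbf Y(t)$, $\mathbf P_{x(t)}=\mathbf X(t)'\mathbf Q(t)$, $\mathbf P_{y(t)}=\mathbf Y(t)'\mathbf U(t)$, $\mathbf H(t)=\mathbf P_{x(t)}+\mathbf P_{y(t)}$, and for $z\in\mathbb C^+$ let $G=(\mathbf H(t)-z)^{-1}$. For $j\in\{1,\dots,q\}$, $i\in\{1,\dots,n\}$ define $$\Psi^1_{ji}=[\boldsymbol\Lambda'\mathbf Q(t)G^2(\mathbf I-\mathbf P_{x(t)})]_{ji},\qquad \Psi^2_{ji}=[\mathbf U(t)G^2(\mathbf I-\mathbf P_{y(t)})]_{ji},$$ viewed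 as functions of the entries of $\mathbf Y$ and $\hat{\mathbf Y}$. Then for $l=1,2$, $$\frac{1}{\sqrt{1-t}}\frac{\partial\Psi^l_{ji}}{\partial\hat Y_{ji}}=\frac{1}{\sqrt t}\frac{\partial\Psi^l_{ji}}{\partial Y_{ji}}.$$
   Context: In the paper this is used with $\mathbf Y$ having i.i.d. (scaled) entries of mean $0$, variance $1$, finite fourth moment, and $\hat{\mathbf Y},\hat{\mathbf W}$ independent with (scaled) standard Gaussian entries; the identity itself is pointwise. $\mathbf A'$ denotes transpose. *)

theory Defs
  imports "HOL-Analysis.Analysis"
begin

text \<open>Matrices are rendered as Cartesian types: a real p x q matrix is
  real^'q^'p (rows indexed by 'p). Transpose is transpose, product is **.\<close>

definition cmat :: "real^'n^'m \<Rightarrow> complex^'n^'m" where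
  "cmat A = (\<chi> i j. complex_of_real (A $ i $ j))"

definition Yt :: "real \<Rightarrow> real^'n^'q \<Rightarrow> real^'n^'q \<Rightarrow> real^'n^'q" where
  "Yt t Y Yh = sqrt t *\<^sub>R Y + sqrt (1 - t) *\<^sub>R Yh"

definition Xt :: "real^'q^'p \<Rightarrow> real^'p^'p \<Rightarrow> real \<Rightarrow> real^'n^'q \<Rightarrow> real^'n^'q
    \<Rightarrow> real^'n^'p \<Rightarrow> real^'n^'p" where
  "Xt Lam Gam t Y Yh Wh = Lam ** Yt t Y Yh + Gam ** Wh"

definition Qmat :: "real^'n^'p \<Rightarrow> real^'n^'p" where
  "Qmat X = matrix_inv (X ** transpose X) ** X"

definition Pmat :: "real^'n^'p \<Rightarrow> real^'n^'n" where
  "Pmat X = transpose X ** Qmat X"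

definition Gres :: "real^'n^'p \<Rightarrow> real^'n^'q \<Rightarrow> complex \<Rightarrow> complex^'n^'n" where
  "Gres X Y z = matrix_inv (cmat (Pmat X + Pmat Y) - mat z)"

definition Psi1 :: "real^'q^'p \<Rightarrow> real^'p^'p \<Rightarrow> real \<Rightarrow> complex \<Rightarrow> real^'n^'q \<Rightarrow> real^'n^'q
    \<Rightarrow> real^'n^'p \<Rightarrow> complex^'n^'q" where
  "Psi1 Lam Gam t z Y Yh Wh =
     (let X = Xt Lam Gam t Y Yh Wh; G = Gres X (Yt t Y Yh) z in
      cmat (transpose Lam ** Qmat X) ** (G ** G) ** cmat (mat 1 - Pmat X))"

definition Psi2 :: "real^'q^'p \<Rightarrow> real^'p^'p \<Rightarrow> real \<Rightarrow> complex \<Rightarrow> real^'n^'q \<Rightarrow> real^'n^'q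
    \<Rightarrow> real^'n^'p \<Rightarrow> complex^'n^'q" where
  "Psi2 Lam Gam t z Y Yh Wh =
     (let X = Xt Lam Gam t Y Yh Wh; Y' = Yt t Y Yh; G = Gres X Y' z in
      cmat (Qmat Y') ** (G ** G) ** cmat (mat 1 - Pmat Y'))"

definition upd_entry :: "real^'n^'q \<Rightarrow> 'q \<Rightarrow> 'n \<Rightarrow> real \<Rightarrow> real^'n^'q" where
  "upd_entry A j i s = (\<chi> a b. if a = j \<and> b = i then s else A $ a $ b)"

end

theory Submission
  imports Defs
begin

text \<open>Both \<open>\<Psi>\<^sup>1\<close> and \<open>\<Psi>\<^sup>2\<close> depend on \<open>Y\<close> and \<open>Yh\<close> only through
  \<open>Y(t) = \<surd>t Y + \<surd>(1-t) Yh\<close>. Moving \<open>Yh\<^sub>j\<^sub>i\<close> by \<open>s\<close> moves \<open>Y(t)\<^sub>j\<^sub>i\<close> by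
  \<open>\<surd>(1-t) s\<close>, moving \<open>Y\<^sub>j\<^sub>i\<close> by \<open>s\<close> moves it by \<open>\<surd>t s\<close>, so by the chain rule both
  sides equal the derivative of \<open>\<Psi>\<^sup>l\<^sub>j\<^sub>i\<close> with respect to \<open>Y(t)\<^sub>j\<^sub>i\<close>.
  The chain rule needs that derivative to exist: the entries are rational functions of the
  entries of \<open>Y(t)\<close> with denominators \<open>det (XX')\<close>, \<open>det (YY')\<close> and \<open>det (H - z)\<close>, and the
  last one is nonzero because \<open>H\<close> is real symmetric and \<open>z\<close> is not real.\<close>

definition entrywise_differentiable_at ::
    "(real \<Rightarrow> 'a::real_normed_field^'n^'m) \<Rightarrow> real \<Rightarrow> bool" where
  "entrywise_differentiable_at M x \<longleftrightarrow> (\<forall>a b. (\<lambda>s. M s $ a $ b) differentiable (at x))"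

lemma entrywise_differentiable_at_const: "entrywise_differentiable_at (\<lambda>s. C) x"
  by (simp add: entrywise_differentiable_at_def)

lemma entrywise_differentiable_at_add:
  "entrywise_differentiable_at A x \<Longrightarrow> entrywise_differentiable_at B x \<Longrightarrow>
    entrywise_differentiable_at (\<lambda>s. A s + B s) x"
  by (simp add: entrywise_differentiable_at_def)

lemma entrywise_differentiable_at_diff:
  "entrywise_differentiable_at A x \<Longrightarrow> entrywise_differentiable_at B x \<Longrightarrow>
    entrywise_differentiable_at (\<lambda>s. A s - B s) x"
  by (simp add: entrywise_differentiable_at_def)

lemma entrywise_differentiable_at_matrix_mult:
  "entrywise_differentiable_at A x \<Longrightarrow> entrywise_differentiable_at B x \<Longrightarrow>
    entrywise_differentiable_at (\<lambda>s. A s ** B s) x"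
  unfolding entrywise_differentiable_at_def matrix_matrix_mult_def
  by (auto intro!: differentiable_sum differentiable_mult)

lemma entrywise_differentiable_at_transpose:
  "entrywise_differentiable_at A x \<Longrightarrow> entrywise_differentiable_at (\<lambda>s. transpose (A s)) x"
  by (simp add: entrywise_differentiable_at_def transpose_def)

lemma entrywise_differentiable_at_cmat:
  "entrywise_differentiable_at A x \<Longrightarrow> entrywise_differentiable_at (\<lambda>s. cmat (A s)) x"
  unfolding entrywise_differentiable_at_def cmat_def differentiable_def
  using has_derivative_of_real by fastforce

lemma entrywise_differentiable_at_upd_entry:
  "entrywise_differentiable_at (\<lambda>s. upd_entry A j i s) x"
  unfolding entrywise_differentiable_at_def upd_entry_def
proof (intro allI)
  fix a b
  show "(\<lambda>s. (\<chi> a b. if a = j \<and> b = i then s else A $ a $ b) $ a $ b) differentiable at x"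
    by (cases "a = j \<and> b = i") auto
qed

lemma differentiable_prod:
  fixes f :: "'i \<Rightarrow> real \<Rightarrow> 'a::real_normed_field"
  shows "finite S \<Longrightarrow> (\<forall>k\<in>S. f k differentiable (at x)) \<Longrightarrow>
    (\<lambda>s. \<Prod>k\<in>S. f k s) differentiable (at x)"
  by (induction S rule: finite_induct) auto

lemma differentiable_det:
  "entrywise_differentiable_at M x \<Longrightarrow> (\<lambda>s. det (M s)) differentiable (at x)"
  unfolding det_def entrywise_differentiable_at_def
  by (auto intro!: differentiable_sum differentiable_mult differentiable_prod)

lemma matrix_inv_right:
  fixes A :: "'a::field^'n^'n"
  assumes "invertible A" shows "A ** matrix_inv A = mat 1"
  using someI_ex[OF assms[unfolded invertible_def]] unfolding matrix_inv_def by auto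

lemma matrix_inv_left:
  fixes A :: "'a::field^'n^'n"
  assumes "invertible A" shows "matrix_inv A ** A = mat 1"
  using someI_ex[OF assms[unfolded invertible_def]] unfolding matrix_inv_def by auto

lemma matrix_inv_unique:
  fixes A :: "'a::field^'n^'n"
  assumes "A ** B = mat 1" "B ** A = mat 1"
  shows "matrix_inv A = B"
proof -
  have "invertible A" using assms unfolding invertible_def by blast
  have "matrix_inv A = matrix_inv A ** (A ** B)" by (simp add: assms(1))
  also have "\<dots> = B" by (simp add: matrix_mul_assoc matrix_inv_left[OF \<open>invertible A\<close>])
  finally show ?thesis .
qed

lemma transpose_matrix_inv:
  fixes A :: "'a::field^'n^'n"
  assumes "invertible A"
  shows "transpose (matrix_inv A) = matrix_inv (transpose A)"
  using arg_cong[OF matrix_inv_left[OF assms], of transpose]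
    arg_cong[OF matrix_inv_right[OF assms], of transpose]
  by (auto simp: matrix_transpose_mul intro!: matrix_inv_unique[symmetric])

lemma matrix_inv_nth_cramer:
  fixes A :: "'a::field^'n^'n"
  assumes "invertible A"
  shows "matrix_inv A $ k $ l =
    det (\<chi> a b. if b = k then (if a = l then 1 else 0) else A $ a $ b) / det A"
proof -
  let ?e = "axis l (1::'a)"
  have "A *v (matrix_inv A *v ?e) = ?e"
    by (simp add: matrix_vector_mul_assoc matrix_inv_right[OF assms])
  then have "matrix_inv A *v ?e = (\<chi> k. det (\<chi> a b. if b = k then ?e $ a else A $ a $ b) / det A)"
    using cramer assms invertible_det_nz by blast
  moreover have "(matrix_inv A *v ?e) $ k = matrix_inv A $ k $ l"
    by (simp add: matrix_vector_mult_def axis_def if_distrib cong: if_cong)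
  ultimately show ?thesis
    by (simp add: axis_def if_distrib cong: if_cong)
qed

lemma entrywise_differentiable_at_matrix_inv:
  fixes M :: "real \<Rightarrow> 'a::real_normed_field^'n^'n"
  assumes M: "entrywise_differentiable_at M x" and inv: "invertible (M x)"
  shows "entrywise_differentiable_at (\<lambda>s. matrix_inv (M s)) x"
  unfolding entrywise_differentiable_at_def
proof (intro allI)
  fix k l
  define N where "N s = (\<chi> a b. if b = k then (if a = l then 1 else 0) else M s $ a $ b)" for s
  have "entrywise_differentiable_at N x"
    unfolding entrywise_differentiable_at_def
  proof (intro allI)
    fix a b show "(\<lambda>s. N s $ a $ b) differentiable at x"
      using M by (cases "b = k") (simp_all add: entrywise_differentiable_at_def N_def)
  qed
  then have cramer_quotient: "(\<lambda>s. det (N s) / det (M s)) differentiable (at x)"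
    using differentiable_det[OF M] inv invertible_det_nz
    by (auto intro!: differentiable_divide differentiable_det)
  have "isCont (\<lambda>s. det (M s)) x"
    using differentiable_det[OF M] differentiable_imp_continuous_within by blast
  then obtain e where "e > 0" and e: "\<And>y. dist y x < e \<Longrightarrow> invertible (M y)"
    using continuous_at_avoid[of x "\<lambda>s. det (M s)" 0] inv
    by (auto simp: dist_commute invertible_det_nz)
  show "(\<lambda>s. matrix_inv (M s) $ k $ l) differentiable at x"
    by (rule differentiable_transform_within[OF cramer_quotient \<open>e > 0\<close>])
      (simp_all add: N_def e matrix_inv_nth_cramer)
qed

lemma real_symmetric_eigenvalue_real:
  fixes H :: "real^'n^'n" and v :: "complex^'n"
  assumes sym: "transpose H = H" and eigen: "cmat H *v v = z *s v" and "v \<noteq> 0"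
  shows "Im z = 0"
proof -
  define S where "S = (\<Sum>k\<in>UNIV. \<Sum>l\<in>UNIV. cnj (v $ k) * complex_of_real (H $ k $ l) * v $ l)"
  define N where "N = (\<Sum>k\<in>UNIV. (cmod (v $ k))\<^sup>2)"
  have row: "(\<Sum>l\<in>UNIV. complex_of_real (H $ k $ l) * v $ l) = z * v $ k" for k
    using arg_cong[OF eigen, of "\<lambda>w. w $ k"] by (simp add: matrix_vector_mult_def cmat_def)
  have "S = (\<Sum>k\<in>UNIV. cnj (v $ k) * (\<Sum>l\<in>UNIV. complex_of_real (H $ k $ l) * v $ l))"
    by (simp add: S_def sum_distrib_left mult.assoc)
  also have "\<dots> = z * (\<Sum>k\<in>UNIV. cnj (v $ k) * v $ k)"
    by (simp add: row sum_distrib_left mult.left_commute)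
  also have "(\<Sum>k\<in>UNIV. cnj (v $ k) * v $ k) = complex_of_real N"
    unfolding N_def by (simp only: of_real_sum complex_norm_square mult.commute)
  finally have S_eq: "S = z * complex_of_real N" .
  have H_sym: "H $ k $ l = H $ l $ k" for k l
    using arg_cong[OF sym, of "\<lambda>M. M $ l $ k"] by (simp add: transpose_def)
  have "cnj S = (\<Sum>k\<in>UNIV. \<Sum>l\<in>UNIV. cnj (v $ l) * complex_of_real (H $ l $ k) * v $ k)"
    unfolding S_def by (simp add: H_sym mult_ac)
  also have "\<dots> = S"
    unfolding S_def by (rule sum.swap[symmetric])
  finally have "Im (cnj S) = Im S" by simp
  then have "Im S = 0" by simp
  obtain k where "v $ k \<noteq> 0"
    using \<open>v \<noteq> 0\<close> by (metis vec_eq_iff zero_index)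
  then have "0 < N"
    unfolding N_def by (intro sum_pos2[where i=k]) auto
  with \<open>Im S = 0\<close> show ?thesis
    by (simp add: S_eq)
qed

lemma invertible_cmat_minus_nonreal:
  fixes H :: "real^'n^'n"
  assumes "transpose H = H" and "Im z \<noteq> 0"
  shows "invertible (cmat H - mat z)"
  unfolding invertible_left_inverse matrix_left_invertible_ker
proof (intro allI impI)
  fix v assume "(cmat H - mat z) *v v = 0"
  moreover have "mat z *v v = z *s v"
    by (simp add: vec_eq_iff matrix_vector_mult_def mat_def if_distrib[where f = "\<lambda>c. c * _"]
        cong: if_cong)
  ultimately have "cmat H *v v = z *s v"
    by (simp add: matrix_vector_mult_diff_rdistrib)
  then show "v = 0"
    using real_symmetric_eigenvalue_real[OF assms(1)] assms(2) by blast
qed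

lemma transpose_Pmat:
  fixes X :: "real^'n^'p"
  assumes "invertible (X ** transpose X)"
  shows "transpose (Pmat X) = Pmat X"
  using transpose_matrix_inv[OF assms]
  by (simp add: Pmat_def Qmat_def matrix_transpose_mul matrix_mul_assoc)

lemma entrywise_differentiable_at_Qmat:
  fixes X :: "real \<Rightarrow> real^'n^'p"
  assumes "entrywise_differentiable_at X x" and "invertible (X x ** transpose (X x))"
  shows "entrywise_differentiable_at (\<lambda>s. Qmat (X s)) x"
  unfolding Qmat_def
  by (intro entrywise_differentiable_at_matrix_mult entrywise_differentiable_at_matrix_inv
      entrywise_differentiable_at_transpose assms)

lemma entrywise_differentiable_at_Pmat:
  fixes X :: "real \<Rightarrow> real^'n^'p"
  assumes "entrywise_differentiable_at X x" and "invertible (X x ** transpose (X x))"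
  shows "entrywise_differentiable_at (\<lambda>s. Pmat (X s)) x"
  unfolding Pmat_def
  by (intro entrywise_differentiable_at_matrix_mult entrywise_differentiable_at_Qmat
      entrywise_differentiable_at_transpose assms)

lemma entrywise_differentiable_at_Gres:
  fixes X :: "real \<Rightarrow> real^'n^'p" and Y :: "real \<Rightarrow> real^'n^'q"
  assumes X: "entrywise_differentiable_at X x" "invertible (X x ** transpose (X x))"
    and Y: "entrywise_differentiable_at Y x" "invertible (Y x ** transpose (Y x))"
    and "Im z \<noteq> 0"
  shows "entrywise_differentiable_at (\<lambda>s. Gres (X s) (Y s) z) x"
proof -
  have "transpose (Pmat (X x) + Pmat (Y x)) = Pmat (X x) + Pmat (Y x)"
    using transpose_Pmat[OF X(2)] transpose_Pmat[OF Y(2)]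
    by (simp add: transpose_def vec_eq_iff)
  then have "invertible (cmat (Pmat (X x) + Pmat (Y x)) - mat z)"
    using invertible_cmat_minus_nonreal \<open>Im z \<noteq> 0\<close> by blast
  then show ?thesis
    unfolding Gres_def
    by (intro entrywise_differentiable_at_matrix_inv entrywise_differentiable_at_diff
        entrywise_differentiable_at_cmat entrywise_differentiable_at_add
        entrywise_differentiable_at_Pmat entrywise_differentiable_at_const X Y)
qed

definition Psi1_of_Yt :: "real^'q^'p \<Rightarrow> real^'p^'p \<Rightarrow> complex \<Rightarrow> real^'n^'p \<Rightarrow> real^'n^'q
    \<Rightarrow> complex^'n^'q" where
  "Psi1_of_Yt Lam Gam z Wh Ym =
     (let X = Lam ** Ym + Gam ** Wh; G = Gres X Ym z in
      cmat (transpose Lam ** Qmat X) ** (G ** G) ** cmat (mat 1 - Pmat X))"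

definition Psi2_of_Yt :: "real^'q^'p \<Rightarrow> real^'p^'p \<Rightarrow> complex \<Rightarrow> real^'n^'p \<Rightarrow> real^'n^'q
    \<Rightarrow> complex^'n^'q" where
  "Psi2_of_Yt Lam Gam z Wh Ym =
     (let X = Lam ** Ym + Gam ** Wh; G = Gres X Ym z in
      cmat (Qmat Ym) ** (G ** G) ** cmat (mat 1 - Pmat Ym))"

lemma Psi1_eq_Psi1_of_Yt: "Psi1 Lam Gam t z Y Yh Wh = Psi1_of_Yt Lam Gam z Wh (Yt t Y Yh)"
  by (simp add: Psi1_def Psi1_of_Yt_def Xt_def)

lemma Psi2_eq_Psi2_of_Yt: "Psi2 Lam Gam t z Y Yh Wh = Psi2_of_Yt Lam Gam z Wh (Yt t Y Yh)"
  by (simp add: Psi2_def Psi2_of_Yt_def Xt_def Let_def)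

lemma entrywise_differentiable_at_Psi_of_Yt:
  fixes M :: "real \<Rightarrow> real^'n^'q" and Lam :: "real^'q^'p" and Gam :: "real^'p^'p"
    and Wh :: "real^'n^'p"
  assumes M: "entrywise_differentiable_at M x"
    and invX: "invertible ((Lam ** M x + Gam ** Wh) ** transpose (Lam ** M x + Gam ** Wh))"
    and invY: "invertible (M x ** transpose (M x))"
    and "Im z \<noteq> 0"
  shows "entrywise_differentiable_at (\<lambda>s. Psi1_of_Yt Lam Gam z Wh (M s)) x"
    and "entrywise_differentiable_at (\<lambda>s. Psi2_of_Yt Lam Gam z Wh (M s)) x"
proof -
  have X: "entrywise_differentiable_at (\<lambda>s. Lam ** M s + Gam ** Wh) x"
    by (intro entrywise_differentiable_at_add entrywise_differentiable_at_matrix_mult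
        entrywise_differentiable_at_const M)
  note Q = entrywise_differentiable_at_Qmat and P = entrywise_differentiable_at_Pmat
  note G = entrywise_differentiable_at_Gres[OF X invX M invY \<open>Im z \<noteq> 0\<close>]
  show "entrywise_differentiable_at (\<lambda>s. Psi1_of_Yt Lam Gam z Wh (M s)) x"
    unfolding Psi1_of_Yt_def Let_def
    by (intro entrywise_differentiable_at_matrix_mult entrywise_differentiable_at_cmat
        entrywise_differentiable_at_diff entrywise_differentiable_at_const
        Q[OF X invX] P[OF X invX] G)
  show "entrywise_differentiable_at (\<lambda>s. Psi2_of_Yt Lam Gam z Wh (M s)) x"
    unfolding Psi2_of_Yt_def Let_def
    by (intro entrywise_differentiable_at_matrix_mult entrywise_differentiable_at_cmat
        entrywise_differentiable_at_diff entrywise_differentiable_at_const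
        Q[OF M invY] P[OF M invY] G)
qed

lemma vector_derivative_compose_affine:
  fixes g :: "real \<Rightarrow> 'a::real_normed_vector"
  assumes "g differentiable (at (a + c * x))"
  shows "vector_derivative (\<lambda>s. g (a + c * s)) (at x) = c *\<^sub>R vector_derivative g (at (a + c * x))"
proof -
  have "((\<lambda>s. a + c * s) has_vector_derivative c) (at x)"
    by (auto intro!: derivative_eq_intros)
  then show ?thesis
    using vector_derivative_chain_at[of "\<lambda>s. a + c * s" x g] assms
    by (auto simp: comp_def vector_derivative_at differentiable_def has_vector_derivative_def)
qed

lemma Yt_upd_entry_left:
  "Yt t (upd_entry Y j i s) Yh = upd_entry (Yt t Y Yh) j i (sqrt (1 - t) * Yh $ j $ i + sqrt t * s)"
  by (simp add: Yt_def upd_entry_def vec_eq_iff)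

lemma Yt_upd_entry_right:
  "Yt t Y (upd_entry Yh j i s) = upd_entry (Yt t Y Yh) j i (sqrt t * Y $ j $ i + sqrt (1 - t) * s)"
  by (simp add: Yt_def upd_entry_def vec_eq_iff)

lemma vector_derivatives_through_Yt:
  fixes Phi :: "real^'n^'q \<Rightarrow> 'a::real_normed_vector" and t :: real and Y Yh :: "real^'n^'q"
    and j :: 'q and i :: 'n
  defines "g \<equiv> \<lambda>u. Phi (upd_entry (Yt t Y Yh) j i u)"
  assumes "g differentiable (at (Yt t Y Yh $ j $ i))"
  shows "vector_derivative (\<lambda>s. Phi (Yt t (upd_entry Y j i s) Yh)) (at (Y $ j $ i))
      = sqrt t *\<^sub>R vector_derivative g (at (Yt t Y Yh $ j $ i))"
    and "vector_derivative (\<lambda>s. Phi (Yt t Y (upd_entry Yh j i s))) (at (Yh $ j $ i))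
      = sqrt (1 - t) *\<^sub>R vector_derivative g (at (Yt t Y Yh $ j $ i))"
proof -
  have "Yt t Y Yh $ j $ i = sqrt (1 - t) * Yh $ j $ i + sqrt t * Y $ j $ i"
    by (simp add: Yt_def)
  then show "vector_derivative (\<lambda>s. Phi (Yt t (upd_entry Y j i s) Yh)) (at (Y $ j $ i))
      = sqrt t *\<^sub>R vector_derivative g (at (Yt t Y Yh $ j $ i))"
    using vector_derivative_compose_affine[of g "sqrt (1 - t) * Yh $ j $ i" "sqrt t" "Y $ j $ i"]
      assms(2)
    by (simp add: Yt_upd_entry_left g_def)
  have "Yt t Y Yh $ j $ i = sqrt t * Y $ j $ i + sqrt (1 - t) * Yh $ j $ i"
    by (simp add: Yt_def)
  then show "vector_derivative (\<lambda>s. Phi (Yt t Y (upd_entry Yh j i s))) (at (Yh $ j $ i))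
      = sqrt (1 - t) *\<^sub>R vector_derivative g (at (Yt t Y Yh $ j $ i))"
    using vector_derivative_compose_affine[of g "sqrt t * Y $ j $ i" "sqrt (1 - t)" "Yh $ j $ i"]
      assms(2)
    by (simp add: Yt_upd_entry_right g_def)
qed

theorem lemma6p4:
  fixes Lam :: "real^'q^'p" and Gam :: "real^'p^'p"
    and Y Yh :: "real^'n^'q" and Wh :: "real^'n^'p"
    and t :: real and z :: complex and j :: 'q and i :: 'n
  assumes "Gam ** transpose Gam = mat 1 - Lam ** transpose Lam"
    and "0 < t" and "t < 1"
    and "invertible (Xt Lam Gam t Y Yh Wh ** transpose (Xt Lam Gam t Y Yh Wh))"
    and "invertible (Yt t Y Yh ** transpose (Yt t Y Yh))"
    and "Im z > 0"
  shows "(\<forall>Psi \<in> {Psi1 Lam Gam t z, Psi2 Lam Gam t z}.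
     (1 / sqrt (1 - t)) *\<^sub>R
        vector_derivative (\<lambda>s. Psi Y (upd_entry Yh j i s) Wh $ j $ i) (at (Yh $ j $ i))
   = (1 / sqrt t) *\<^sub>R
        vector_derivative (\<lambda>s. Psi (upd_entry Y j i s) Yh Wh $ j $ i) (at (Y $ j $ i)))"
proof -
  let ?Y0 = "Yt t Y Yh"
  let ?M = "\<lambda>u. upd_entry ?Y0 j i u"
  have "?M (?Y0 $ j $ i) = ?Y0"
    by (simp add: upd_entry_def vec_eq_iff)
  then have invX: "invertible ((Lam ** ?M (?Y0 $ j $ i) + Gam ** Wh)
        ** transpose (Lam ** ?M (?Y0 $ j $ i) + Gam ** Wh))"
    and invY: "invertible (?M (?Y0 $ j $ i) ** transpose (?M (?Y0 $ j $ i)))"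
    using assms(4,5) by (simp_all add: Xt_def)
  have "Im z \<noteq> 0"
    using assms(6) by simp
  note Psi_of_Yt_differentiable = entrywise_differentiable_at_Psi_of_Yt
    [OF entrywise_differentiable_at_upd_entry invX invY this,
     unfolded entrywise_differentiable_at_def]
  have scaled_partials_agree: "(1 / sqrt (1 - t)) *\<^sub>R
        vector_derivative (\<lambda>s. Phi (Yt t Y (upd_entry Yh j i s))) (at (Yh $ j $ i))
      = (1 / sqrt t) *\<^sub>R
        vector_derivative (\<lambda>s. Phi (Yt t (upd_entry Y j i s) Yh)) (at (Y $ j $ i))"
    if "(\<lambda>u. Phi (?M u)) differentiable (at (?Y0 $ j $ i))" for Phi :: "real^'n^'q \<Rightarrow> complex"
    using vector_derivatives_through_Yt[OF that] assms(2,3) by simp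
  show ?thesis
    using scaled_partials_agree[of "\<lambda>M. Psi1_of_Yt Lam Gam z Wh M $ j $ i"]
      scaled_partials_agree[of "\<lambda>M. Psi2_of_Yt Lam Gam z Wh M $ j $ i"]
      Psi_of_Yt_differentiable
    by (simp add: Psi1_eq_Psi1_of_Yt Psi2_eq_Psi2_of_Yt)
qed

end
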